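(* Let $\varepsilon\in\{-1,1\}$, let $M(\phi,\xi,\eta,g_M)$ be a Lorentzian almost (para)contact manifold of dimension $2m+1$, let $(N,g_N)$ be a semi-Riemannian manifold of dimension $n$, and let $F:M\to N$ be an anti-invariant semi-Riemannian submersion such that $\phi(\ker F_* )=\{0\}$. Then $\xi$ is vertical, $2m=n$ and $\ker F_*=\mathrm{Span}\{\xi\}$. Moreover, $N$ is a Riemannian manifold.
   Context: A Lorentzian almost contact ($\varepsilon=-1$), resp. almost paracontact ($\varepsilon=1$), manifold is a $(2m+1)$-dimensional manifold $M$ with Lorentzian metric $g_M$, $(1,1)$-tensor $\phi$, vector field $\xi$ and $1$-form $\eta$ with $\phi^2X=\varepsilon X+\eta(X)\xi$, $g_M(\phi X,\phi Y)=g_M(X,Y)+\eta(X)\eta(Y)$, $\eta(X)=\varepsilon g_M(X,\xi)$, $\eta(\xi)=-\varepsilon$. A semi-Riemannian submersion $F:M\to N$ is a submersion with nondegenerate fibres such that $F_*$ is an isometry from $(\ker F_* )^\perp$ onto $TN$; it is anti-invariant if $\phi(\ker F_* )\subseteq(\ker F_* )^\perp$. $\xi$ vertical means $\xi$ takes values in $\ker F_*$. A Riemannian manifold has positive definite metric. *)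

theory Defs
  imports "HOL-Analysis.Analysis"
begin

text \<open>Tangent spaces of M are modelled by a Euclidean space 'a (of dimension 2m+1),
tangent spaces of N by a Euclidean space 'b (of dimension n).\<close>

definition symmetric_form :: "('a \<Rightarrow> 'a \<Rightarrow> real) \<Rightarrow> bool" where
  "symmetric_form g \<longleftrightarrow> (\<forall>u v. g u v = g v u)"

definition nondegenerate_on :: "('a::real_vector \<Rightarrow> 'a \<Rightarrow> real) \<Rightarrow> 'a set \<Rightarrow> bool" where
  "nondegenerate_on g S \<longleftrightarrow> (\<forall>u\<in>S. (\<forall>v\<in>S. g u v = 0) \<longrightarrow> u = 0)"

definition neg_index :: "('a::euclidean_space \<Rightarrow> 'a \<Rightarrow> real) \<Rightarrow> nat" where
  "neg_index g = Max {dim S | S. subspace S \<and> (\<forall>v\<in>S. v \<noteq> 0 \<longrightarrow> g v v < 0)}"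

definition semi_riem_form :: "('a::euclidean_space \<Rightarrow> 'a \<Rightarrow> real) \<Rightarrow> bool" where
  "semi_riem_form g \<longleftrightarrow> bilinear g \<and> symmetric_form g \<and> nondegenerate_on g UNIV"

definition riem_form :: "('a::euclidean_space \<Rightarrow> 'a \<Rightarrow> real) \<Rightarrow> bool" where
  "riem_form g \<longleftrightarrow> semi_riem_form g \<and> (\<forall>v. v \<noteq> 0 \<longrightarrow> g v v > 0)"

definition lorentz_form :: "('a::euclidean_space \<Rightarrow> 'a \<Rightarrow> real) \<Rightarrow> bool" where
  "lorentz_form g \<longleftrightarrow> semi_riem_form g \<and> neg_index g = 1"

text \<open>Semi-Riemannian manifold (O'Neill): metric of constant index at every point.\<close>
definition semi_riem_metric :: "'q set \<Rightarrow> ('q \<Rightarrow> 'b::euclidean_space \<Rightarrow> 'b \<Rightarrow> real) \<Rightarrow> bool" where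
  "semi_riem_metric N g \<longleftrightarrow> (\<forall>q\<in>N. semi_riem_form (g q)) \<and> (\<exists>\<nu>. \<forall>q\<in>N. neg_index (g q) = \<nu>)"

definition riem_metric :: "'q set \<Rightarrow> ('q \<Rightarrow> 'b::euclidean_space \<Rightarrow> 'b \<Rightarrow> real) \<Rightarrow> bool" where
  "riem_metric N g \<longleftrightarrow> (\<forall>q\<in>N. riem_form (g q))"

text \<open>Lorentzian almost contact (eps = -1) / paracontact (eps = 1) structure.\<close>
definition lorentz_apc :: "real \<Rightarrow> 'p set \<Rightarrow> ('p \<Rightarrow> 'a::euclidean_space \<Rightarrow> 'a)
    \<Rightarrow> ('p \<Rightarrow> 'a) \<Rightarrow> ('p \<Rightarrow> 'a \<Rightarrow> real) \<Rightarrow> ('p \<Rightarrow> 'a \<Rightarrow> 'a \<Rightarrow> real) \<Rightarrow> bool" where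
  "lorentz_apc eps M phi xi eta g \<longleftrightarrow>
     (\<forall>p\<in>M. lorentz_form (g p) \<and> linear (phi p) \<and> linear (eta p)
        \<and> (\<forall>X. phi p (phi p X) = eps *\<^sub>R X + eta p X *\<^sub>R xi p)
        \<and> (\<forall>X Y. g p (phi p X) (phi p Y) = g p X Y + eta p X * eta p Y)
        \<and> (\<forall>X. eta p X = eps * g p X (xi p))
        \<and> eta p (xi p) = - eps)"

definition vert :: "('p \<Rightarrow> 'a::real_vector \<Rightarrow> 'b::real_vector) \<Rightarrow> 'p \<Rightarrow> 'a set" where
  "vert dF p = {v. dF p v = 0}"

definition orth_compl :: "('a \<Rightarrow> 'a \<Rightarrow> real) \<Rightarrow> 'a set \<Rightarrow> 'a set" where
  "orth_compl g V = {u. \<forall>v\<in>V. g u v = 0}"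

text \<open>Semi-Riemannian submersion F with differential dF (dF p : T_pM \<rightarrow> T_{F p}N).\<close>
definition semi_riem_submersion :: "'p set \<Rightarrow> ('p \<Rightarrow> 'a::euclidean_space \<Rightarrow> 'a \<Rightarrow> real)
    \<Rightarrow> 'q set \<Rightarrow> ('q \<Rightarrow> 'b::euclidean_space \<Rightarrow> 'b \<Rightarrow> real)
    \<Rightarrow> ('p \<Rightarrow> 'q) \<Rightarrow> ('p \<Rightarrow> 'a \<Rightarrow> 'b) \<Rightarrow> bool" where
  "semi_riem_submersion M gM N gN F dF \<longleftrightarrow> DIM('b) < DIM('a) \<and>
     (\<forall>p\<in>M. F p \<in> N \<and> linear (dF p) \<and> range (dF p) = UNIV
        \<and> nondegenerate_on (gM p) (vert dF p)
        \<and> dF p ` orth_compl (gM p) (vert dF p) = UNIV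
        \<and> (\<forall>u\<in>orth_compl (gM p) (vert dF p). \<forall>v\<in>orth_compl (gM p) (vert dF p).
              gN (F p) (dF p u) (dF p v) = gM p u v))"

definition anti_invariant :: "'p set \<Rightarrow> ('p \<Rightarrow> 'a::real_vector \<Rightarrow> 'a) \<Rightarrow> ('p \<Rightarrow> 'a \<Rightarrow> 'a \<Rightarrow> real)
    \<Rightarrow> ('p \<Rightarrow> 'a \<Rightarrow> 'b::real_vector) \<Rightarrow> bool" where
  "anti_invariant M phi gM dF \<longleftrightarrow>
     (\<forall>p\<in>M. phi p ` vert dF p \<subseteq> orth_compl (gM p) (vert dF p))"

end

theory Submission
  imports Defs
begin

text \<open>Since \<open>\<phi>\<close> kills vertical vectors, every vertical \<open>v\<close> satisfies
\<open>0 = \<phi>\<^sup>2 v = \<epsilon> v + \<eta>(v) \<xi>\<close>, so the vertical space, which is nonzero because \<open>F\<close> lowers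
dimension, is the line spanned by \<open>\<xi>\<close>; rank--nullity then gives \<open>n = 2m\<close>.
Since \<open>\<xi>\<close> is timelike and the metric of \<open>M\<close> has index 1, its orthogonal complement, the
horizontal space, is spacelike; \<open>F\<^sub>*\<close> maps it isometrically onto \<open>T N\<close>, so \<open>g\<^sub>N\<close> has index 0
at one point, hence everywhere because the index of a semi-Riemannian metric is constant.\<close>

lemmas real_bilinear_simps =
  bilinear_ladd bilinear_radd bilinear_lmul bilinear_rmul bilinear_lzero bilinear_rzero

lemma dim_le_neg_index:
  fixes g :: "'a::euclidean_space \<Rightarrow> 'a \<Rightarrow> real"
  assumes "subspace S" and "\<forall>v\<in>S. v \<noteq> 0 \<longrightarrow> g v v < 0"
  shows "dim S \<le> neg_index g"
  unfolding neg_index_def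
proof (rule Max_ge)
  show "finite {dim S |S. subspace S \<and> (\<forall>v\<in>S. v \<noteq> 0 \<longrightarrow> g v v < 0)}"
    by (rule finite_subset[of _ "{..DIM('a)}"]) (auto simp: dim_subset_UNIV)
  show "dim S \<in> {dim S |S. subspace S \<and> (\<forall>v\<in>S. v \<noteq> 0 \<longrightarrow> g v v < 0)}"
    using assms by blast
qed

lemma neg_index_eq_0_if_pos_def:
  fixes g :: "'a::euclidean_space \<Rightarrow> 'a \<Rightarrow> real"
  assumes "\<forall>v. v \<noteq> 0 \<longrightarrow> g v v > 0"
  shows "neg_index g = 0"
proof -
  have "dim S = 0" if "\<forall>v\<in>S. v \<noteq> 0 \<longrightarrow> g v v < 0" for S :: "'a set"
  proof -
    have "S \<subseteq> {0}"
      using assms that by force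
    then show ?thesis
      using dim_subset[of S "{0}"] by simp
  qed
  then have "{dim S |S. subspace S \<and> (\<forall>v\<in>S. v \<noteq> 0 \<longrightarrow> g v v < 0)} = {0}"
    by (auto intro!: exI[of _ "{0::'a}"] simp: subspace_0)
  then show ?thesis
    unfolding neg_index_def by simp
qed

lemma nonneg_if_neg_index_eq_0:
  fixes g :: "'a::euclidean_space \<Rightarrow> 'a \<Rightarrow> real"
  assumes "bilinear g" and "neg_index g = 0"
  shows "g v v \<ge> 0"
proof (rule ccontr)
  assume "\<not> g v v \<ge> 0"
  then have neg: "g v v < 0" by simp
  then have "v \<noteq> 0"
    using assms(1) by (auto simp: real_bilinear_simps)
  have "\<forall>u\<in>span {v}. u \<noteq> 0 \<longrightarrow> g u u < 0"
  proof (intro ballI impI)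
    fix u assume "u \<in> span {v}" "u \<noteq> 0"
    then obtain k where "u = k *\<^sub>R v" "k \<noteq> 0"
      by (auto simp: span_singleton)
    then have "g u u = (k * k) * g v v" and "k * k > 0"
      using assms(1) by (simp add: real_bilinear_simps, metis not_real_square_gt_zero)
    with neg show "g u u < 0"
      by (simp add: mult_pos_neg)
  qed
  then have "dim (span {v}) \<le> neg_index g"
    by (intro dim_le_neg_index) auto
  with \<open>v \<noteq> 0\<close> assms(2) show False by simp
qed

text \<open>An isotropic vector \<open>v\<close> pairing nontrivially with a vector \<open>w\<close> of nonnegative length
can be pushed into the negative cone: \<open>t = -g v w / (g w w + 1)\<close> gives
\<open>g(v + t w, v + t w) (g w w + 1)\<^sup>2 = -(g v w)\<^sup>2 (g w w + 2) < 0\<close>.\<close>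

lemma isotropic_perturbation_negative:
  fixes g :: "'a::real_vector \<Rightarrow> 'a \<Rightarrow> real"
  assumes b: "bilinear g" and "symmetric_form g"
    and "g v v = 0" and "g v w \<noteq> 0" and "g w w \<ge> 0"
  shows "\<exists>t. g (v + t *\<^sub>R w) (v + t *\<^sub>R w) < 0"
proof -
  define c d where "c = g v w" and "d = g w w"
  define t where "t = - c / (d + 1)"
  have "g w v = c"
    using assms(2) by (simp add: symmetric_form_def c_def)
  then have expand: "g (v + t *\<^sub>R w) (v + t *\<^sub>R w) = 2 * t * c + t * t * d"
    using assms(3) by (simp add: real_bilinear_simps[OF b] c_def d_def algebra_simps)
  have "d + 1 > 0" "c * c > 0"
    using assms(4,5) by (simp add: d_def, metis c_def not_real_square_gt_zero)
  moreover have "(2 * t * c + t * t * d) * (d + 1)\<^sup>2 = - (c * c) * (d + 2)"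
  proof -
    have "t * (d + 1) = - c"
      using \<open>d + 1 > 0\<close> by (simp add: t_def)
    have "(2 * t * c + t * t * d) * (d + 1)\<^sup>2
        = 2 * c * (t * (d + 1)) * (d + 1) + (t * (d + 1)) * (t * (d + 1)) * d"
      by (simp add: power2_eq_square algebra_simps)
    also have "\<dots> = - (c * c) * (d + 2)"
      unfolding \<open>t * (d + 1) = - c\<close> by (simp add: algebra_simps)
    finally show ?thesis .
  qed
  ultimately have "(2 * t * c + t * t * d) * (d + 1)\<^sup>2 < 0"
    using assms(5) by (simp add: d_def)
  then have "2 * t * c + t * t * d < 0"
    by (simp add: mult_less_0_iff)
  with expand show ?thesis by (intro exI[of _ t]) simp
qed

lemma riem_form_if_nonneg:
  fixes g :: "'a::euclidean_space \<Rightarrow> 'a \<Rightarrow> real"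
  assumes "semi_riem_form g" and nonneg: "\<forall>v. g v v \<ge> 0"
  shows "riem_form g"
proof -
  have b: "bilinear g" and "symmetric_form g" and nd: "nondegenerate_on g UNIV"
    using assms(1) by (auto simp: semi_riem_form_def)
  have "g v v > 0" if "v \<noteq> 0" for v
  proof (rule ccontr)
    assume "\<not> g v v > 0"
    then have "g v v = 0" using nonneg[rule_format, of v] by simp
    moreover obtain w where "g v w \<noteq> 0"
      using nd \<open>v \<noteq> 0\<close> unfolding nondegenerate_on_def by blast
    ultimately show False
      using isotropic_perturbation_negative[OF b \<open>symmetric_form g\<close>] nonneg by (metis not_le)
  qed
  with assms(1) show ?thesis
    by (simp add: riem_form_def)
qed

lemma riem_metric_if_pos_def_at:
  fixes g :: "'q \<Rightarrow> 'b::euclidean_space \<Rightarrow> 'b \<Rightarrow> real"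
  assumes "semi_riem_metric N g" and "q0 \<in> N" and "\<forall>v. v \<noteq> 0 \<longrightarrow> g q0 v v > 0"
  shows "riem_metric N g"
  unfolding riem_metric_def
proof
  fix q assume "q \<in> N"
  obtain \<nu> where \<nu>: "\<forall>q\<in>N. neg_index (g q) = \<nu>" and sr: "\<forall>q\<in>N. semi_riem_form (g q)"
    using assms(1) unfolding semi_riem_metric_def by blast
  have "\<nu> = 0"
    using \<nu> assms(2) neg_index_eq_0_if_pos_def[of "g q0", OF assms(3)] by auto
  then have "\<forall>v. g q v v \<ge> 0"
    using \<nu> sr \<open>q \<in> N\<close> nonneg_if_neg_index_eq_0 by (auto simp: semi_riem_form_def)
  with sr \<open>q \<in> N\<close> show "riem_form (g q)"
    by (simp add: riem_form_if_nonneg)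
qed

lemma lorentz_form_nonneg_orthogonal_timelike:
  fixes g :: "'a::euclidean_space \<Rightarrow> 'a \<Rightarrow> real"
  assumes "lorentz_form g" and timelike: "g a a < 0" and orth: "g h a = 0"
  shows "g h h \<ge> 0"
proof (rule ccontr)
  assume "\<not> g h h \<ge> 0"
  then have neg: "g h h < 0" by simp
  have b: "bilinear g" and idx: "neg_index g = 1"
    using assms(1) by (auto simp: lorentz_form_def semi_riem_form_def)
  have "g a h = 0"
    using assms(1) orth by (simp add: lorentz_form_def semi_riem_form_def symmetric_form_def)
  have "\<forall>u\<in>span {a, h}. u \<noteq> 0 \<longrightarrow> g u u < 0"
  proof (intro ballI impI)
    fix u assume "u \<in> span {a, h}" "u \<noteq> 0"
    then obtain s where "u - s *\<^sub>R a \<in> span {h}"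
      by (auto simp: span_breakdown_eq)
    then obtain c where "u - s *\<^sub>R a = c *\<^sub>R h"
      by (auto simp: span_singleton)
    then have u: "u = s *\<^sub>R a + c *\<^sub>R h"
      by (simp add: algebra_simps)
    have "g u u = (s * s) * g a a + (c * c) * g h h"
      using orth \<open>g a h = 0\<close> by (simp add: u real_bilinear_simps[OF b] algebra_simps)
    moreover have "s \<noteq> 0 \<or> c \<noteq> 0"
      using \<open>u \<noteq> 0\<close> u by auto
    ultimately show "g u u < 0"
      using timelike neg
      by (smt (verit) mult_pos_neg mult_nonneg_nonpos not_real_square_gt_zero zero_le_square)
  qed
  then have "dim (span {a, h}) \<le> 1"
    using dim_le_neg_index[of "span {a, h}" g] idx by simp
  moreover have "h \<noteq> 0"
    using neg b by (auto simp: real_bilinear_simps)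
  moreover have "a \<notin> span {h}"
    using timelike orth b by (auto simp: span_singleton real_bilinear_simps)
  ultimately show False
    by (simp add: dim_insert)
qed

text \<open>Projecting a witness \<open>w\<close> of nondegeneracy onto the orthogonal complement of \<open>a\<close>
keeps \<open>g h w\<close>, so an isotropic \<open>h\<close> there could be perturbed inside the complement to a
timelike vector, contradicting the previous lemma.\<close>

lemma lorentz_form_pos_orthogonal_timelike:
  fixes g :: "'a::euclidean_space \<Rightarrow> 'a \<Rightarrow> real"
  assumes lf: "lorentz_form g" and timelike: "g a a < 0"
    and orth: "g h a = 0" and "h \<noteq> 0"
  shows "g h h > 0"
proof (rule ccontr)
  assume "\<not> g h h > 0"
  then have iso: "g h h = 0"
    using lorentz_form_nonneg_orthogonal_timelike[OF lf timelike orth] by simp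
  have b: "bilinear g" and sym: "symmetric_form g" and nd: "nondegenerate_on g UNIV"
    using lf by (auto simp: lorentz_form_def semi_riem_form_def)
  obtain w where w: "g h w \<noteq> 0"
    using nd \<open>h \<noteq> 0\<close> unfolding nondegenerate_on_def by blast
  define w' where "w' = w - (g w a / g a a) *\<^sub>R a"
  have w'_orth: "g w' a = 0"
    using timelike by (simp add: w'_def real_bilinear_simps[OF b] bilinear_lsub[OF b])
  have "g h w' = g h w"
    using orth by (simp add: w'_def real_bilinear_simps[OF b] bilinear_rsub[OF b])
  then obtain t where t: "g (h + t *\<^sub>R w') (h + t *\<^sub>R w') < 0"
    using isotropic_perturbation_negative[OF b sym iso, of w'] w
      lorentz_form_nonneg_orthogonal_timelike[OF lf timelike w'_orth] by auto
  have "g (h + t *\<^sub>R w') a = 0"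
    using orth w'_orth by (simp add: real_bilinear_simps[OF b])
  with t show False
    using lorentz_form_nonneg_orthogonal_timelike[OF lf timelike] by (metis not_le)
qed

lemma linear_kernel_nontrivial:
  fixes f :: "'a::euclidean_space \<Rightarrow> 'b::euclidean_space"
  assumes "linear f" and "DIM('b) < DIM('a)"
  obtains v where "v \<noteq> 0" and "f v = 0"
proof (rule ccontr)
  assume "\<not> thesis"
  with that have "inj f"
    using assms(1) by (auto simp: linear_injective_0)
  then have "dim (range f) = dim (UNIV :: 'a set)"
    using assms(1) by (intro dim_image_eq) (auto simp: inj_on_def)
  then show False
    using dim_subset_UNIV[of "range f"] assms(2) by simp
qed

lemma subspace_eq_span_singleton:
  assumes "subspace V" and "V \<subseteq> span {a}" and "v \<in> V" and "v \<noteq> 0"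
  shows "V = span {a}"
proof
  obtain k where "v = k *\<^sub>R a" and "k \<noteq> 0"
    using assms(2-4) by (auto simp: span_singleton)
  then have "a = inverse k *\<^sub>R v"
    by simp
  then have "a \<in> V"
    using assms(1,3) by (simp add: subspace_scale)
  then show "span {a} \<subseteq> V"
    using assms(1) by (simp add: span_minimal)
qed (fact assms(2))

text \<open>\<open>f\<close> is injective on the Euclidean hyperplane orthogonal to its kernel, and still
surjective there.\<close>

lemma dim_eq_Suc_if_kernel_eq_line:
  fixes f :: "'a::euclidean_space \<Rightarrow> 'b::euclidean_space"
  assumes lin: "linear f" and "surj f" and ker: "{v. f v = 0} = span {a}" and "a \<noteq> 0"
  shows "DIM('a) = Suc DIM('b)"
proof -
  define T where "T = {x. a \<bullet> x = 0}"
  have "inj_on f T"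
  proof (rule inj_onI)
    fix x y assume "x \<in> T" "y \<in> T" "f x = f y"
    then have "f (x - y) = 0"
      using lin by (simp add: linear_diff)
    then have "x - y \<in> span {a}"
      using ker by blast
    then obtain k where k: "x - y = k *\<^sub>R a"
      by (auto simp: span_singleton)
    have "a \<bullet> (x - y) = 0"
      using \<open>x \<in> T\<close> \<open>y \<in> T\<close> by (simp add: T_def inner_diff_right)
    then have "k * (a \<bullet> a) = 0"
      by (simp add: k)
    with k \<open>a \<noteq> 0\<close> show "x = y"
      by simp
  qed
  moreover have "f ` T = UNIV"
  proof (intro set_eqI iffI)
    fix y :: 'b
    obtain x where x: "y = f x"
      using \<open>surj f\<close> by auto
    define z where "z = x - ((a \<bullet> x) / (a \<bullet> a)) *\<^sub>R a"
    have "f a = 0"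
      using ker span_base[of a "{a}"] by blast
    then have "f z = y"
      using lin x by (simp add: z_def linear_diff linear_scale)
    moreover have "z \<in> T"
      using \<open>a \<noteq> 0\<close> by (simp add: z_def T_def inner_diff_right)
    ultimately show "y \<in> f ` T"
      by blast
  qed simp
  moreover have "span T = T"
    using subspace_hyperplane[of a] by (simp add: T_def)
  ultimately have "dim (UNIV :: 'b set) = dim T"
    using dim_image_eq[OF lin, of T] by (simp only:)
  then have "dim T = DIM('b)"
    by simp
  moreover have "dim T = DIM('a) - 1"
    using dim_hyperplane[OF \<open>a \<noteq> 0\<close>] by (simp add: T_def)
  ultimately show ?thesis
    using DIM_positive[where 'a='a] by linarith
qed

lemma pos_def_if_isometric_onto:
  fixes f :: "'a::real_vector \<Rightarrow> 'b::real_vector"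
    and g :: "'a \<Rightarrow> 'a \<Rightarrow> real" and g' :: "'b \<Rightarrow> 'b \<Rightarrow> real"
  assumes "linear f" and "f ` H = UNIV"
    and "\<forall>u\<in>H. \<forall>v\<in>H. g' (f u) (f v) = g u v"
    and "\<forall>h\<in>H. h \<noteq> 0 \<longrightarrow> g h h > 0"
  shows "\<forall>y. y \<noteq> 0 \<longrightarrow> g' y y > 0"
proof (intro allI impI)
  fix y :: 'b assume "y \<noteq> 0"
  obtain u where "u \<in> H" and y: "y = f u"
    using assms(2) by (metis UNIV_I imageE)
  with \<open>y \<noteq> 0\<close> have "u \<noteq> 0"
    using assms(1) by (auto simp: linear_0)
  with \<open>u \<in> H\<close> y assms(3,4) show "g' y y > 0"
    by simp
qed

lemma almost_paracontact_kernel_subset: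
  fixes phi :: "'a::real_vector \<Rightarrow> 'a"
  assumes "linear phi" and "\<forall>X. phi (phi X) = eps *\<^sub>R X + eta X *\<^sub>R xi"
    and "eps \<noteq> 0" and "phi v = 0"
  shows "v \<in> span {xi}"
proof -
  have "phi (phi v) = 0"
    using assms(1,4) by (simp add: linear_0)
  then have "eps *\<^sub>R v + eta v *\<^sub>R xi = 0"
    using assms(2) by simp
  then have "inverse eps *\<^sub>R (eps *\<^sub>R v + eta v *\<^sub>R xi) = 0"
    by simp
  then have "v + (eta v / eps) *\<^sub>R xi = 0"
    using assms(3) by (simp add: scaleR_add_right divide_inverse mult.commute)
  then have "v = (- (eta v / eps)) *\<^sub>R xi"
    by (simp add: eq_neg_iff_add_eq_0)
  then show ?thesis
    by (metis span_base span_mul insertI1)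
qed

lemma lorentz_apc_xi_timelike:
  assumes "lorentz_apc eps M phi xi eta g" and "eps \<noteq> 0" and "p \<in> M"
  shows "g p (xi p) (xi p) = -1" and "xi p \<noteq> 0"
proof -
  have "eps * g p (xi p) (xi p) = eps * -1" and "linear (eta p)" and "eta p (xi p) = - eps"
    using assms(1,3) unfolding lorentz_apc_def by auto
  then show "g p (xi p) (xi p) = -1" and "xi p \<noteq> 0"
    using assms(2) by (metis mult_cancel_left, metis linear_0 neg_equal_0_iff_equal)
qed

lemma vert_eq_span_xi:
  fixes gM :: "'p \<Rightarrow> 'a::euclidean_space \<Rightarrow> 'a \<Rightarrow> real"
    and gN :: "'q \<Rightarrow> 'b::euclidean_space \<Rightarrow> 'b \<Rightarrow> real"
  assumes apc: "lorentz_apc eps M phi xi eta gM" and "eps \<noteq> 0"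
    and sub: "semi_riem_submersion M gM N gN F dF"
    and "p \<in> M" and kills: "phi p ` vert dF p = {0}"
  shows "vert dF p = span {xi p}"
proof -
  have lin: "linear (dF p)" and dim: "DIM('b) < DIM('a)"
    using sub \<open>p \<in> M\<close> by (auto simp: semi_riem_submersion_def)
  obtain v where "v \<noteq> 0" and "dF p v = 0"
    using linear_kernel_nontrivial[OF lin dim] .
  moreover have "vert dF p \<subseteq> span {xi p}"
  proof
    fix u assume "u \<in> vert dF p"
    then have "phi p u = 0"
      using kills by blast
    moreover have "linear (phi p)" and "\<forall>X. phi p (phi p X) = eps *\<^sub>R X + eta p X *\<^sub>R xi p"
      using apc \<open>p \<in> M\<close> by (auto simp: lorentz_apc_def)
    ultimately show "u \<in> span {xi p}"
      using almost_paracontact_kernel_subset \<open>eps \<noteq> 0\<close> by blast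
  qed
  moreover have "subspace (vert dF p)"
    using linear_subspace_kernel[OF lin] by (simp add: vert_def)
  ultimately show ?thesis
    by (intro subspace_eq_span_singleton[of _ _ v]) (auto simp: vert_def)
qed

lemma target_metric_pos_def:
  fixes gM :: "'p \<Rightarrow> 'a::euclidean_space \<Rightarrow> 'a \<Rightarrow> real"
    and gN :: "'q \<Rightarrow> 'b::euclidean_space \<Rightarrow> 'b \<Rightarrow> real"
  assumes apc: "lorentz_apc eps M phi xi eta gM" and "eps \<noteq> 0"
    and sub: "semi_riem_submersion M gM N gN F dF"
    and "p \<in> M" and vert: "vert dF p = span {xi p}"
  shows "\<forall>y. y \<noteq> 0 \<longrightarrow> gN (F p) y y > 0"
proof -
  define H where "H = orth_compl (gM p) (vert dF p)"
  have "linear (dF p)" and "dF p ` H = UNIV"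
    and "\<forall>u\<in>H. \<forall>v\<in>H. gN (F p) (dF p u) (dF p v) = gM p u v"
    using sub \<open>p \<in> M\<close> by (auto simp: semi_riem_submersion_def H_def)
  moreover have "lorentz_form (gM p)"
    using apc \<open>p \<in> M\<close> by (simp add: lorentz_apc_def)
  moreover have "gM p (xi p) (xi p) < 0"
    using lorentz_apc_xi_timelike(1)[OF apc \<open>eps \<noteq> 0\<close> \<open>p \<in> M\<close>] by simp
  moreover have "gM p h (xi p) = 0" if "h \<in> H" for h
    using that vert span_base[of "xi p" "{xi p}"] by (simp add: H_def orth_compl_def)
  ultimately show ?thesis
    using pos_def_if_isometric_onto[of "dF p" H "gN (F p)" "gM p"]
      lorentz_form_pos_orthogonal_timelike by blast
qed

theorem mainTheorem14:
  fixes eps :: real and m :: nat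
    and M :: "'p set" and N :: "'q set"
    and phi :: "'p \<Rightarrow> 'a::euclidean_space \<Rightarrow> 'a" and xi :: "'p \<Rightarrow> 'a"
    and eta :: "'p \<Rightarrow> 'a \<Rightarrow> real" and gM :: "'p \<Rightarrow> 'a \<Rightarrow> 'a \<Rightarrow> real"
    and gN :: "'q \<Rightarrow> 'b::euclidean_space \<Rightarrow> 'b \<Rightarrow> real"
    and F :: "'p \<Rightarrow> 'q" and dF :: "'p \<Rightarrow> 'a \<Rightarrow> 'b"
  assumes "eps \<in> {-1, 1}"
    and "M \<noteq> {}"
    and "DIM('a) = 2 * m + 1"
    and "lorentz_apc eps M phi xi eta gM"
    and "semi_riem_metric N gN"
    and "semi_riem_submersion M gM N gN F dF"
    and "anti_invariant M phi gM dF"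
    and "\<forall>p\<in>M. phi p ` vert dF p = {0}"
  shows "(\<forall>p\<in>M. xi p \<in> vert dF p) \<and> 2 * m = DIM('b)
         \<and> (\<forall>p\<in>M. vert dF p = span {xi p}) \<and> riem_metric N gN"
proof -
  have "eps \<noteq> 0"
    using assms(1) by auto
  have vert: "\<forall>p\<in>M. vert dF p = span {xi p}"
    using vert_eq_span_xi[OF assms(4) \<open>eps \<noteq> 0\<close> assms(6)] assms(8) by blast
  obtain p where "p \<in> M"
    using assms(2) by blast
  have "linear (dF p)" and "surj (dF p)" and "F p \<in> N"
    using assms(6) \<open>p \<in> M\<close> by (auto simp: semi_riem_submersion_def)
  moreover have "{v. dF p v = 0} = span {xi p}"
    using vert \<open>p \<in> M\<close> by (simp add: vert_def)
  ultimately have "DIM('a) = Suc DIM('b)"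
    using dim_eq_Suc_if_kernel_eq_line
      lorentz_apc_xi_timelike(2)[OF assms(4) \<open>eps \<noteq> 0\<close> \<open>p \<in> M\<close>] by blast
  moreover have "riem_metric N gN"
    using riem_metric_if_pos_def_at[OF assms(5) \<open>F p \<in> N\<close>]
      target_metric_pos_def[OF assms(4) \<open>eps \<noteq> 0\<close> assms(6) \<open>p \<in> M\<close>] vert \<open>p \<in> M\<close> by blast
  ultimately show ?thesis
    using vert assms(3) by (auto intro: span_base)
qed

end
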